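(* Let $G$ be a graph with $n$ vertices, $m\geq 1$ edges and maximum degree $\Delta$, let $\mathcal{L}(G)$ be its line graph, and let $0\leq\alpha\leq 1$. Then $$S_{k}(A_{\alpha}(\mathcal{L}(G)))\leq 2k(\alpha \Delta-1)+(1-\alpha)S_{k}(Q(G))$$ for $1\leq k \leq s$, where $s=\min\{n,m\}$. If $m>n$, then $$S_{k}(A_{\alpha}(\mathcal{L}(G)))\leq 2\alpha k(\Delta-1)+2(1-\alpha)(m-k)$$ for $n+1\leq k \leq m$.
   Context: All graphs are simple and undirected. $A(G)$ is the adjacency matrix, $D(G)$ the diagonal degree matrix, $Q(G)=D(G)+A(G)$ the signless Laplacian, and $A_{\alpha}(G)=\alpha D(G)+(1-\alpha)A(G)$. For a real symmetric matrix $M$ with eigenvalues $\lambda_1(M)\geq\cdots\geq\lambda_n(M)$, $S_k(M)=\sum_{i=1}^k\lambda_i(M)$. The line graph $\mathcal{L}(G)$ has vertex set $E(G)$, two vertices being adjacent iff the corresponding edges of $G$ share an endpoint. *)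

theory Defs
  imports "Jordan_Normal_Form.Char_Poly"
begin

text \<open>Eigenvalues (with multiplicity) of a real square matrix whose characteristic
polynomial splits over the reals (e.g. a real symmetric matrix), listed in
non-increasing order.\<close>
definition eigvals :: "real mat \<Rightarrow> real list" where
  "eigvals M = (THE ls. sorted_wrt (\<ge>) ls \<and>
      char_poly M = prod_list (map (\<lambda>a. [:- a, 1:]) ls))"

definition S_k :: "nat \<Rightarrow> real mat \<Rightarrow> real" where
  "S_k k M = sum_list (take k (eigvals M))"

definition adj_mat :: "nat \<Rightarrow> (nat \<Rightarrow> nat \<Rightarrow> bool) \<Rightarrow> real mat" where
  "adj_mat n adj = mat n n (\<lambda>(i,j). if adj i j then 1 else 0)"

definition degree :: "nat \<Rightarrow> (nat \<Rightarrow> nat \<Rightarrow> bool) \<Rightarrow> nat \<Rightarrow> nat" where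
  "degree n adj i = card {j. j < n \<and> adj i j}"

definition deg_mat :: "nat \<Rightarrow> (nat \<Rightarrow> nat \<Rightarrow> bool) \<Rightarrow> real mat" where
  "deg_mat n adj = mat n n (\<lambda>(i,j). if i = j then real (degree n adj i) else 0)"

definition signless_laplacian :: "nat \<Rightarrow> (nat \<Rightarrow> nat \<Rightarrow> bool) \<Rightarrow> real mat" where
  "signless_laplacian n adj = deg_mat n adj + adj_mat n adj"

definition A_alpha :: "real \<Rightarrow> nat \<Rightarrow> (nat \<Rightarrow> nat \<Rightarrow> bool) \<Rightarrow> real mat" where
  "A_alpha \<alpha> n adj = \<alpha> \<cdot>\<^sub>m deg_mat n adj + (1 - \<alpha>) \<cdot>\<^sub>m adj_mat n adj"

definition simple_graph :: "nat \<Rightarrow> nat set set \<Rightarrow> bool" where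
  "simple_graph n E \<longleftrightarrow> (\<forall>e\<in>E. e \<subseteq> {..<n} \<and> card e = 2)"

definition graph_adj :: "nat set set \<Rightarrow> nat \<Rightarrow> nat \<Rightarrow> bool" where
  "graph_adj E i j \<longleftrightarrow> {i, j} \<in> E"

definition max_degree :: "nat \<Rightarrow> nat set set \<Rightarrow> nat" where
  "max_degree n E = Max {degree n (graph_adj E) i | i. i < n}"

text \<open>Line graph: its vertices (the edges of G) are indexed by {0..<card E} via a fixed
enumeration of E; spectra do not depend on the chosen enumeration.\<close>
definition edge_enum :: "nat set set \<Rightarrow> nat \<Rightarrow> nat set" where
  "edge_enum E = (SOME f. bij_betw f {..<card E} E)"

definition line_adj :: "nat set set \<Rightarrow> nat \<Rightarrow> nat \<Rightarrow> bool" where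
  "line_adj E i j \<longleftrightarrow> i \<noteq> j \<and> edge_enum E i \<inter> edge_enum E j \<noteq> {}"

end

(* Let R be the n x m vertex-edge incidence matrix of G. Then R R^T = Q(G) and
   R^T R = A(L(G)) + 2I, and an edge uv has degree d(u) + d(v) - 2 <= 2 Delta - 2 in L(G).
   Hence every unit vector x in R^m satisfies
     x^T A_alpha(L(G)) x <= 2 alpha Delta - 2 + (1 - alpha) |R x|^2.
   By Ky Fan's principle, S_k(A_alpha(L(G))) is the sum of this quadratic form over k orthonormal
   eigenvectors x_1, ..., x_k, so it remains to bound sum_i |R x_i|^2. For an orthonormal
   eigenbasis v_j of Q(G) with eigenvalues mu_j, the vectors R^T v_j are orthogonal with squared
   norms mu_j, and Bessel's inequality writes sum_i |R x_i|^2 as sum_j mu_j t_j with 0 <= t_j <= 1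
   and sum_j t_j <= k, which is at most S_k(Q(G)). For k > n, Bessel's inequality gives instead
   sum_i |R x_i|^2 <= sum_a |row a of R|^2 = 2m. *)

theory Submission
  imports Defs "Jordan_Normal_Form.Schur_Decomposition"
begin

definition diag_mat_of :: "'a::zero list \<Rightarrow> 'a mat" where
  "diag_mat_of es = mat (length es) (length es) (\<lambda>(i,j). if i = j then es ! i else 0)"

definition orthonormal_mat :: "nat \<Rightarrow> 'a::comm_ring_1 mat \<Rightarrow> bool" where
  "orthonormal_mat n U \<longleftrightarrow> U \<in> carrier_mat n n \<and> transpose_mat U * U = 1\<^sub>m n"

lemma orthonormal_mat_right_inverse:
  assumes "orthonormal_mat n (U :: 'a::field mat)"
  shows "U * transpose_mat U = 1\<^sub>m n"
  using assms mat_mult_left_right_inverse[of "transpose_mat U" n U]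
  unfolding orthonormal_mat_def by auto

lemma orthonormal_mat_mult:
  assumes U: "orthonormal_mat n U" and P: "orthonormal_mat n P"
  shows "orthonormal_mat n (U * P)"
proof -
  have Uc: "U \<in> carrier_mat n n" and Pc: "P \<in> carrier_mat n n"
    using U P unfolding orthonormal_mat_def by auto
  have "transpose_mat (U * P) * (U * P) = transpose_mat P * (transpose_mat U * U) * P"
    using Uc Pc by (simp add: transpose_mult[OF Uc Pc] assoc_mult_mat[of _ n n _ n _ n])
  then show ?thesis using U P Uc Pc unfolding orthonormal_mat_def by simp
qed

lemma transpose_congruence_sym:
  assumes "A \<in> carrier_mat n n" "W \<in> carrier_mat n k" "transpose_mat A = (A :: 'a::comm_semiring_0 mat)"
  shows "transpose_mat (transpose_mat W * A * W) = transpose_mat W * A * W"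
  using assms
  by (simp add: transpose_mult[of _ k n _ k] transpose_mult[of _ n n _ k] assoc_mult_mat[of _ k n _ n _ k])

lemma orthonormal_mat_with_first_col:
  fixes v :: "real vec"
  assumes v: "v \<in> carrier_vec n" and v0: "v \<noteq> 0\<^sub>v n"
  shows "\<exists>W. orthonormal_mat n W \<and> col W 0 = (1 / sqrt (v \<bullet> v)) \<cdot>\<^sub>v v"
proof -
  interpret cof_vec_space n "TYPE(real)" .
  define b where "b = basis_completion v"
  from basis_completion[OF v v0, folded b_def]
  have dist_b: "distinct b" and indep: "\<not> lin_dep (set b)" and b: "set b \<subseteq> carrier_vec n"
    and hdb: "hd b = v" and len_b: "length b = n" by auto
  have n0: "0 < n" using v v0 by (cases n) auto
  from hdb len_b n0 obtain vs where bv: "b = v # vs" by (cases b) auto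
  define ws where "ws = gram_schmidt n b"
  from gram_schmidt_result[OF b dist_b indep refl, folded ws_def]
  have wsc: "set ws \<subseteq> carrier_vec n" and orth: "corthogonal ws" and lws: "length ws = n"
    by (auto simp: len_b)
  from gram_schmidt_hd[OF v, of vs, folded bv] have "hd ws = v" unfolding ws_def .
  then have ws0: "ws ! 0 = v" using lws n0 by (cases ws) auto
  have wsi: "\<And>i. i < n \<Longrightarrow> ws ! i \<in> carrier_vec n" using wsc lws by auto
  have wsdot: "\<And>i j. i < n \<Longrightarrow> j < n \<Longrightarrow> ws ! i \<bullet> ws ! j = 0 \<longleftrightarrow> i \<noteq> j"
    using corthogonalD[OF orth] lws by auto
  have "\<And>w :: real vec. 0 \<le> w \<bullet> w" unfolding scalar_prod_def by (auto intro: sum_nonneg)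
  then have wpos: "\<And>i. i < n \<Longrightarrow> ws ! i \<bullet> ws ! i > 0"
    using wsdot by (metis order_le_less)
  define nm where "nm = (\<lambda>w::real vec. (1 / sqrt (w \<bullet> w)) \<cdot>\<^sub>v w)"
  define W where "W = mat_of_cols n (map nm ws)"
  have W: "W \<in> carrier_mat n n" unfolding W_def using lws by auto
  have colW: "\<And>i. i < n \<Longrightarrow> col W i = nm (ws ! i)"
    unfolding W_def using wsi lws by (auto simp: nm_def)
  have coldot: "\<And>i j. i < n \<Longrightarrow> j < n \<Longrightarrow> col W i \<bullet> col W j = (if i = j then 1 else 0)"
  proof -
    fix i j assume i: "i < n" and j: "j < n"
    have "col W i \<bullet> col W j
        = (1 / sqrt (ws ! i \<bullet> ws ! i)) * (1 / sqrt (ws ! j \<bullet> ws ! j)) * (ws ! i \<bullet> ws ! j)"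
      unfolding colW[OF i] colW[OF j] nm_def using wsi[OF i] wsi[OF j] by simp
    then show "col W i \<bullet> col W j = (if i = j then 1 else 0)"
      using wsdot[OF i j] wpos[OF i] by (auto simp: field_simps)
  qed
  have "transpose_mat W * W = 1\<^sub>m n"
    by (rule eq_matI) (use W in \<open>auto simp: coldot\<close>)
  moreover have "col W 0 = (1 / sqrt (v \<bullet> v)) \<cdot>\<^sub>v v" using colW[OF n0] ws0 by (simp add: nm_def)
  ultimately show ?thesis using W unfolding orthonormal_mat_def by blast
qed

lemma orthonormal_mat_eigenvector_first_col:
  fixes A :: "real mat"
  assumes A: "A \<in> carrier_mat n n" and e: "eigenvalue A e"
  shows "\<exists>W. orthonormal_mat n W \<and> A *\<^sub>v col W 0 = e \<cdot>\<^sub>v col W 0"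
proof -
  from find_eigenvector[OF A e] obtain v
    where v: "v \<in> carrier_vec n" "v \<noteq> 0\<^sub>v n" and Av: "A *\<^sub>v v = e \<cdot>\<^sub>v v"
    using A unfolding eigenvector_def by blast
  obtain W where W: "orthonormal_mat n W" and W0: "col W 0 = (1 / sqrt (v \<bullet> v)) \<cdot>\<^sub>v v"
    using orthonormal_mat_with_first_col[OF v] by blast
  have "A *\<^sub>v col W 0 = e \<cdot>\<^sub>v col W 0"
    unfolding W0 using Av v A by (auto simp: mult_mat_vec[of _ n n] smult_smult_assoc mult.commute)
  with W show ?thesis by blast
qed

lemma sym_mat_deflation:
  fixes A W :: "real mat"
  assumes A: "A \<in> carrier_mat n n" and A_sym: "transpose_mat A = A" and W: "orthonormal_mat n W"
    and n0: "0 < n" and eig: "A *\<^sub>v col W 0 = e \<cdot>\<^sub>v col W 0"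
  shows "\<exists>A3. A3 \<in> carrier_mat (n-1) (n-1) \<and> transpose_mat A3 = A3 \<and>
    transpose_mat W * A * W = four_block_mat (mat 1 1 (\<lambda>_. e)) (0\<^sub>m 1 (n-1)) (0\<^sub>m (n-1) 1) A3"
proof -
  have Wc: "W \<in> carrier_mat n n" and WtW: "transpose_mat W * W = 1\<^sub>m n"
    using W unfolding orthonormal_mat_def by auto
  define A' where "A' = transpose_mat W * A * W"
  have A'c: "A' \<in> carrier_mat n n" unfolding A'_def using A Wc by auto
  have A'sym: "\<And>i j. i < n \<Longrightarrow> j < n \<Longrightarrow> A' $$ (i,j) = A' $$ (j,i)"
    using transpose_congruence_sym[OF A Wc A_sym, folded A'_def] A'c
    by (metis carrier_matD index_transpose_mat(1))
  have coldot: "col W i \<bullet> col W j = (if i = j then 1 else 0)" if "i < n" "j < n" for i j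
    using arg_cong[OF WtW, of "\<lambda>M. M $$ (i,j)"] Wc that by simp
  have A'col: "A' $$ (i,0) = (if i = 0 then e else 0)" if i: "i < n" for i
  proof -
    have "A' $$ (i,0) = col W i \<bullet> (A *\<^sub>v col W 0)"
      unfolding A'_def using i n0 A Wc by (simp add: assoc_mult_mat[of _ n n _ n _ n] mult_mat_vec_def)
    also have "\<dots> = e * (col W i \<bullet> col W 0)" using eig Wc i n0 by simp
    finally show ?thesis using coldot[OF i n0] by simp
  qed
  define A3 where "A3 = mat (n-1) (n-1) (\<lambda>(i,j). A' $$ (Suc i, Suc j))"
  have "A' = four_block_mat (mat 1 1 (\<lambda>_. e)) (0\<^sub>m 1 (n-1)) (0\<^sub>m (n-1) 1) A3"
    by (rule eq_matI) (use A'c n0 in \<open>auto simp: A3_def A'col A'sym[of 0]\<close>)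
  moreover have "transpose_mat A3 = A3"
    by (rule eq_matI) (use A'c in \<open>auto simp: A3_def A'sym\<close>)
  moreover have "A3 \<in> carrier_mat (n-1) (n-1)" unfolding A3_def by simp
  ultimately show ?thesis unfolding A'_def by blast
qed

lemma orthonormal_mat_four_block:
  assumes "orthonormal_mat m U"
  shows "orthonormal_mat (Suc m) (four_block_mat (1\<^sub>m 1) (0\<^sub>m 1 m) (0\<^sub>m m 1) U)"
    (is "orthonormal_mat _ ?P")
proof -
  have U: "U \<in> carrier_mat m m" and UtU: "transpose_mat U * U = 1\<^sub>m m"
    using assms unfolding orthonormal_mat_def by auto
  have "transpose_mat ?P = four_block_mat (1\<^sub>m 1) (0\<^sub>m 1 m) (0\<^sub>m m 1) (transpose_mat U)"
    by (subst transpose_four_block_mat) (use U in auto)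
  then have "transpose_mat ?P * ?P = four_block_mat (1\<^sub>m 1) (0\<^sub>m 1 m) (0\<^sub>m m 1) (1\<^sub>m m)"
    by (simp, subst mult_four_block_mat[of _ 1 1 _ m _ m _ _ 1 _ m]) (use U UtU in auto)
  then show ?thesis using U unfolding orthonormal_mat_def by (auto intro!: eq_matI)
qed

lemma four_block_congruence:
  fixes U A :: "'a::comm_ring_1 mat"
  assumes U: "U \<in> carrier_mat m m" and A: "A \<in> carrier_mat m m"
  defines "P \<equiv> four_block_mat (1\<^sub>m 1) (0\<^sub>m 1 m) (0\<^sub>m m 1) U"
  shows "transpose_mat P * four_block_mat (mat 1 1 (\<lambda>_. e)) (0\<^sub>m 1 m) (0\<^sub>m m 1) A * P
    = four_block_mat (mat 1 1 (\<lambda>_. e)) (0\<^sub>m 1 m) (0\<^sub>m m 1) (transpose_mat U * A * U)"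
proof -
  have Pt: "transpose_mat P = four_block_mat (1\<^sub>m 1) (0\<^sub>m 1 m) (0\<^sub>m m 1) (transpose_mat U)"
    unfolding P_def by (subst transpose_four_block_mat) (use U in auto)
  have "transpose_mat P * four_block_mat (mat 1 1 (\<lambda>_. e)) (0\<^sub>m 1 m) (0\<^sub>m m 1) A
      = four_block_mat (mat 1 1 (\<lambda>_. e)) (0\<^sub>m 1 m) (0\<^sub>m m 1) (transpose_mat U * A)"
    unfolding Pt
    by (subst mult_four_block_mat[of _ 1 1 _ m _ m _ _ 1 _ m]) (use U A in \<open>auto intro!: eq_matI\<close>)
  then show ?thesis
    unfolding P_def
    by (simp, subst mult_four_block_mat[of _ 1 1 _ m _ m _ _ 1 _ m]) (use U A in \<open>auto intro!: eq_matI\<close>)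
qed

lemma orthonormal_mat_similar:
  assumes W: "orthonormal_mat n (W :: 'a::field mat)" and A: "A \<in> carrier_mat n n"
  shows "similar_mat (transpose_mat W * A * W) A"
  unfolding similar_mat_def
  using W orthonormal_mat_right_inverse[OF W] A
  by (intro exI[of _ "transpose_mat W"] exI[of _ W] similar_mat_witI[of _ _ n])
    (auto simp: orthonormal_mat_def)

lemma char_poly_four_block_scalar:
  assumes "A \<in> carrier_mat m m"
  shows "char_poly (four_block_mat (mat 1 1 (\<lambda>_. e)) (0\<^sub>m 1 m) (0\<^sub>m m 1) A) = [:- e, 1:] * char_poly A"
proof -
  have "char_poly (mat 1 1 (\<lambda>_. e)) = [:- e, 1:]" by (simp add: char_poly_defs det_def sign_def)
  then show ?thesis using char_poly_four_block_zeros_col[of _ _ m A] assms by auto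
qed

lemma sym_mat_orthogonally_diagonalizable:
  fixes A :: "real mat"
  assumes "A \<in> carrier_mat n n" "transpose_mat A = A" "char_poly A = (\<Prod>e\<leftarrow>es. [:- e, 1:])"
  shows "\<exists>U. orthonormal_mat n U \<and> transpose_mat U * A * U = diag_mat_of es"
  using assms
proof (induct es arbitrary: n A)
  case Nil
  then have "n = 0" using degree_monic_char_poly[of A n] by auto
  then show ?case
    by (intro exI[of _ "1\<^sub>m 0"]) (auto intro!: eq_matI simp: diag_mat_of_def orthonormal_mat_def)
next
  case (Cons e es n A)
  have A: "A \<in> carrier_mat n n" and A_sym: "transpose_mat A = A"
    and cp: "char_poly A = [:-e,1:] * (\<Prod>e\<leftarrow>es. [:- e, 1:])" using Cons by auto
  have n: "n = Suc (length es)"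
    using degree_monic_char_poly[OF A] degree_linear_factors[of uminus "e#es"] Cons(4) by auto
  have "eigenvalue A e" unfolding eigenvalue_root_char_poly[OF A] cp by simp
  from orthonormal_mat_eigenvector_first_col[OF A this] obtain W
    where W: "orthonormal_mat n W" and eig: "A *\<^sub>v col W 0 = e \<cdot>\<^sub>v col W 0" by blast
  have Wc: "W \<in> carrier_mat n n" using W unfolding orthonormal_mat_def by simp
  from sym_mat_deflation[OF A A_sym W _ eig] n obtain A3
    where A3: "A3 \<in> carrier_mat (length es) (length es)" and sym3: "transpose_mat A3 = A3"
      and block: "transpose_mat W * A * W
        = four_block_mat (mat 1 1 (\<lambda>_. e)) (0\<^sub>m 1 (length es)) (0\<^sub>m (length es) 1) A3"
    by auto
  have "[:- e, 1:] * char_poly A3 = char_poly A"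
    using char_poly_four_block_scalar[OF A3, of e] char_poly_similar[OF orthonormal_mat_similar[OF W A]]
    by (simp add: block)
  then have "char_poly A3 = (\<Prod>e\<leftarrow>es. [:- e, 1:])" unfolding cp
    by (metis mult_cancel_left pCons_eq_0_iff zero_neq_one)
  from Cons(1)[OF A3 sym3 this] obtain U3
    where U3: "orthonormal_mat (length es) U3" and D3: "transpose_mat U3 * A3 * U3 = diag_mat_of es"
    by blast
  define P where "P = four_block_mat (1\<^sub>m 1) (0\<^sub>m 1 (length es)) (0\<^sub>m (length es) 1) U3"
  have P: "orthonormal_mat n P" unfolding P_def n by (rule orthonormal_mat_four_block[OF U3])
  have U3c: "U3 \<in> carrier_mat (length es) (length es)" and Pc: "P \<in> carrier_mat n n"
    using U3 P unfolding orthonormal_mat_def by auto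
  have "transpose_mat (W * P) * A * (W * P) = transpose_mat P * (transpose_mat W * A * W) * P"
    using Wc Pc A by (simp add: transpose_mult[OF Wc Pc] assoc_mult_mat[of _ n n _ n _ n])
  also have "\<dots> = diag_mat_of (e # es)"
    unfolding block P_def four_block_congruence[OF U3c A3] D3
    by (rule eq_matI) (auto simp: diag_mat_of_def)
  finally show ?case using orthonormal_mat_mult[OF W P] by blast
qed

lemma map_poly_of_real_linear_factors:
  "map_poly (of_real :: real \<Rightarrow> complex) (\<Prod>e\<leftarrow>es. [:- e, 1:]) = (\<Prod>e\<leftarrow>es. [:- of_real e, 1:])"
proof -
  interpret h: map_poly_comm_ring_hom "of_real :: real \<Rightarrow> complex" ..
  show ?thesis
  proof (induct es)
    case (Cons e es)
    then show ?case by (simp only: list.map prod_list.Cons h.hom_mult) simp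
  qed simp
qed

lemma sym_mat_eigenvalue_real:
  fixes A :: "real mat"
  assumes A: "A \<in> carrier_mat n n" and A_sym: "transpose_mat A = A"
    and ev: "eigenvalue (map_mat complex_of_real A) a"
  shows "Im a = 0"
proof -
  let ?B = "map_mat complex_of_real A"
  from ev obtain z where "eigenvector ?B z a" unfolding eigenvalue_def by auto
  then have z: "z \<in> carrier_vec n" and z0: "z \<noteq> 0\<^sub>v n" and Bz: "?B *\<^sub>v z = a \<cdot>\<^sub>v z"
    using A unfolding eigenvector_def by auto
  have Aij: "A $$ (i,j) = A $$ (j,i)" if "i < n" "j < n" for i j
    using A_sym A that by (metis carrier_matD index_transpose_mat(1))
  define s where "s = (\<Sum>i<n. \<Sum>j<n. of_real (A $$ (i,j)) * (z $ j * cnj (z $ i)))"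
  have s: "(?B *\<^sub>v z) \<bullet>c z = s"
    unfolding s_def scalar_prod_def using A z
    by (auto simp: scalar_prod_def sum_distrib_right lessThan_atLeast0 mult.assoc intro!: sum.cong)
  have "cnj s = (\<Sum>i<n. \<Sum>j<n. of_real (A $$ (i,j)) * (cnj (z $ j) * z $ i))"
    unfolding s_def by simp
  also have "\<dots> = (\<Sum>j<n. \<Sum>i<n. of_real (A $$ (i,j)) * (cnj (z $ j) * z $ i))"
    by (rule sum.swap)
  also have "\<dots> = s" unfolding s_def
    by (intro sum.cong refl) (simp add: Aij mult.commute)
  finally have "Im s = 0" by (metis cnj.sel(2) neg_equal_zero)
  have "z \<bullet>c z > 0" using z z0 by simp
  then have "Im (z \<bullet>c z) = 0" and "Re (z \<bullet>c z) > 0" by (auto simp: less_complex_def)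
  moreover have "s = a * (z \<bullet>c z)" unfolding s[symmetric] Bz using z by simp
  ultimately show ?thesis using \<open>Im s = 0\<close> by simp
qed

lemma sym_mat_char_poly_splits:
  fixes A :: "real mat"
  assumes A: "A \<in> carrier_mat n n" and A_sym: "transpose_mat A = A"
  shows "\<exists>es. char_poly A = (\<Prod>e\<leftarrow>es. [:- e, 1:])"
proof -
  interpret h: map_poly_inj_comm_ring_hom "of_real :: real \<Rightarrow> complex" ..
  let ?B = "map_mat complex_of_real A"
  have B: "?B \<in> carrier_mat n n" using A by auto
  from char_poly_factorized[OF B] obtain as where cpB: "char_poly ?B = (\<Prod>a\<leftarrow>as. [:- a, 1:])"
    by auto
  have real: "a = of_real (Re a)" if a: "a \<in> set as" for a
  proof -
    have "poly (char_poly ?B) a = 0" unfolding cpB using a by (induct as) (auto simp: poly_prod_list)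
    then have "Im a = 0" using sym_mat_eigenvalue_real[OF A A_sym] eigenvalue_root_char_poly[OF B] by auto
    then show ?thesis by (simp add: complex_eq_iff)
  qed
  have "map_poly of_real (char_poly A) = char_poly ?B"
    by (rule sym[OF of_real_hom.char_poly_hom[OF A]])
  also have "\<dots> = (\<Prod>e\<leftarrow>map Re as. [:- of_real e, 1:])"
    unfolding cpB using real by (induct as) auto
  also have "\<dots> = map_poly of_real (\<Prod>e\<leftarrow>map Re as. [:- e, 1:])"
    by (rule sym[OF map_poly_of_real_linear_factors])
  finally have "map_poly (of_real :: real \<Rightarrow> complex) (char_poly A)
    = map_poly of_real (\<Prod>e\<leftarrow>map Re as. [:- e, 1:])" .
  then show ?thesis by (intro exI[of _ "map Re as"]) simp
qed

lemma order_linear_factors: "Polynomial.order a (\<Prod>e\<leftarrow>es. [:- e, 1:]) = count (mset es) (a :: 'a::idom)"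
proof (induct es)
  case Nil
  then show ?case by (simp add: order_0I)
next
  case (Cons e es)
  have "(\<Prod>e\<leftarrow>es. [:- e, 1:]) \<noteq> 0" by (auto simp: prod_list_zero_iff)
  then have "[:- e, 1:] * (\<Prod>e\<leftarrow>es. [:- e, 1:]) \<noteq> 0"
    by (metis mult_eq_0_iff pCons_eq_0_iff one_neq_zero)
  then have "Polynomial.order a ([:- e, 1:] * (\<Prod>e\<leftarrow>es. [:- e, 1:]))
      = Polynomial.order a [:- e, 1:] + Polynomial.order a (\<Prod>e\<leftarrow>es. [:- e, 1:])"
    by (rule order_mult)
  moreover have "Polynomial.order a [:- e, 1:] = (if a = e then 1 else 0)"
    using order_power_n_n[of a 1] by (auto simp: order_0I)
  ultimately show ?case using Cons by simp
qed

lemma eigvals_eqI: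
  assumes "sorted_wrt (\<ge>) es" "char_poly A = (\<Prod>e\<leftarrow>es. [:- e, 1:])"
  shows "eigvals A = es"
  unfolding eigvals_def
proof (rule the_equality)
  show "sorted_wrt (\<ge>) es \<and> char_poly A = (\<Prod>e\<leftarrow>es. [:- e, 1:])" using assms by simp
  fix es' assume es': "sorted_wrt (\<ge>) es' \<and> char_poly A = (\<Prod>e\<leftarrow>es'. [:- e, 1:])"
  then have "mset es' = mset es"
    using assms(2) by (intro multiset_eqI) (metis order_linear_factors)
  moreover have "sorted (rev es')" "sorted (rev es)" using es' assms(1) by (auto simp: sorted_wrt_rev)
  ultimately have "sort (rev es) = rev es'" "sort (rev es) = rev es"
    by (auto intro!: properties_for_sort)
  then show "es' = es" by simp
qed

lemma sym_mat_eigvals: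
  fixes A :: "real mat"
  assumes A: "A \<in> carrier_mat n n" and A_sym: "transpose_mat A = A"
  shows "length (eigvals A) = n" and "sorted_wrt (\<ge>) (eigvals A)"
    and "\<exists>U. orthonormal_mat n U \<and> transpose_mat U * A * U = diag_mat_of (eigvals A)"
proof -
  obtain es where es: "char_poly A = (\<Prod>e\<leftarrow>es. [:- e, 1:])"
    using sym_mat_char_poly_splits[OF A A_sym] by blast
  have sorted: "sorted_wrt (\<ge>) (rev (sort es))" by (simp add: sorted_wrt_rev)
  have cp: "char_poly A = (\<Prod>e\<leftarrow>rev (sort es). [:- e, 1:])"
    unfolding es by (subst (1 2) prod_mset_prod_list[symmetric]) simp
  have ev: "eigvals A = rev (sort es)" by (rule eigvals_eqI[OF sorted cp])
  show "sorted_wrt (\<ge>) (eigvals A)" unfolding ev by (rule sorted)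
  show "length (eigvals A) = n"
    using degree_monic_char_poly[OF A] degree_linear_factors[of uminus "rev (sort es)"] cp ev by auto
  show "\<exists>U. orthonormal_mat n U \<and> transpose_mat U * A * U = diag_mat_of (eigvals A)"
    unfolding ev by (rule sym_mat_orthogonally_diagonalizable[OF A A_sym cp])
qed

(* Vectors of R^n are functions on {..<n}; their values elsewhere are irrelevant. *)
definition dot :: "nat \<Rightarrow> (nat \<Rightarrow> real) \<Rightarrow> (nat \<Rightarrow> real) \<Rightarrow> real" where
  "dot n x y = (\<Sum>a<n. x a * y a)"

definition orthonormal :: "nat \<Rightarrow> nat \<Rightarrow> (nat \<Rightarrow> nat \<Rightarrow> real) \<Rightarrow> bool" where
  "orthonormal n k u \<longleftrightarrow> (\<forall>i<k. \<forall>j<k. dot n (u i) (u j) = (if i = j then 1 else 0))"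

definition quad_form :: "nat \<Rightarrow> real mat \<Rightarrow> (nat \<Rightarrow> real) \<Rightarrow> real" where
  "quad_form n A x = (\<Sum>a<n. \<Sum>b<n. A $$ (a,b) * x a * x b)"

definition spectral_basis :: "nat \<Rightarrow> real mat \<Rightarrow> (nat \<Rightarrow> nat \<Rightarrow> real) \<Rightarrow> bool" where
  "spectral_basis n A u \<longleftrightarrow> orthonormal n n u
    \<and> (\<forall>a<n. \<forall>b<n. (\<Sum>j<n. u j a * u j b) = (if a = b then 1 else 0))
    \<and> (\<forall>a<n. \<forall>b<n. A $$ (a,b) = (\<Sum>j<n. eigvals A ! j * u j a * u j b))"

lemma dot_commute: "dot n x y = dot n y x"
  unfolding dot_def by (simp add: mult.commute)

lemma dot_self_nonneg: "0 \<le> dot n x x"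
  unfolding dot_def by (auto intro: sum_nonneg)

lemma index_mult_diag_mat_of_transpose:
  fixes U :: "'a::comm_semiring_0 mat"
  assumes U: "U \<in> carrier_mat n n" and len: "length ls = n" and a: "a < n" and b: "b < n"
  shows "(U * diag_mat_of ls * transpose_mat U) $$ (a,b) = (\<Sum>j<n. ls ! j * U $$ (a,j) * U $$ (b,j))"
proof -
  have D: "diag_mat_of ls \<in> carrier_mat n n" using len by (simp add: diag_mat_of_def)
  have "(U * diag_mat_of ls) $$ (a,j) = U $$ (a,j) * ls ! j" if j: "j < n" for j
  proof -
    have "(U * diag_mat_of ls) $$ (a,j) = (\<Sum>k = 0..<n. U $$ (a,k) * (if k = j then ls ! k else 0))"
      using U len a j by (simp add: scalar_prod_def diag_mat_of_def)
    also have "\<dots> = U $$ (a,j) * ls ! j"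
      using j by (simp add: if_distrib[of "\<lambda>x. _ * x"] sum.delta' cong: if_cong)
    finally show ?thesis .
  qed
  moreover have "(U * diag_mat_of ls * transpose_mat U) $$ (a,b)
      = (\<Sum>j<n. (U * diag_mat_of ls) $$ (a,j) * U $$ (b,j))"
    using U D a b by (simp add: scalar_prod_def lessThan_atLeast0 del: assoc_mult_mat)
  ultimately show ?thesis by (simp add: mult_ac)
qed

lemma sym_mat_spectral_basis:
  fixes A :: "real mat"
  assumes A: "A \<in> carrier_mat n n" and A_sym: "transpose_mat A = A"
  shows "\<exists>u. spectral_basis n A u"
proof -
  obtain U where U: "orthonormal_mat n U" and D: "transpose_mat U * A * U = diag_mat_of (eigvals A)"
    using sym_mat_eigvals(3)[OF A A_sym] by blast
  have Uc: "U \<in> carrier_mat n n" and UtU: "transpose_mat U * U = 1\<^sub>m n"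
    using U unfolding orthonormal_mat_def by auto
  have UUt: "U * transpose_mat U = 1\<^sub>m n" by (rule orthonormal_mat_right_inverse[OF U])
  define u where "u = (\<lambda>j a. U $$ (a,j))"
  have "orthonormal n n u"
    unfolding orthonormal_def
  proof (intro allI impI)
    fix j l assume "j < n" "l < n"
    then show "dot n (u j) (u l) = (if j = l then 1 else 0)"
      using arg_cong[OF UtU, of "\<lambda>M. M $$ (j,l)"] Uc
      by (simp add: scalar_prod_def dot_def u_def lessThan_atLeast0)
  qed
  moreover have "\<forall>a<n. \<forall>b<n. (\<Sum>j<n. u j a * u j b) = (if a = b then 1 else 0)"
  proof (intro allI impI)
    fix a b assume "a < n" "b < n"
    then show "(\<Sum>j<n. u j a * u j b) = (if a = b then 1 else 0)"
      using arg_cong[OF UUt, of "\<lambda>M. M $$ (a,b)"] Uc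
      by (simp add: scalar_prod_def u_def lessThan_atLeast0)
  qed
  moreover have "A = U * diag_mat_of (eigvals A) * transpose_mat U"
  proof -
    have "A = (U * transpose_mat U) * A * (U * transpose_mat U)" using UUt A by simp
    also have "\<dots> = U * (transpose_mat U * A * U) * transpose_mat U"
      using Uc A by (simp add: assoc_mult_mat[of _ n n _ n _ n])
    finally show ?thesis unfolding D .
  qed
  then have "\<forall>a<n. \<forall>b<n. A $$ (a,b) = (\<Sum>j<n. eigvals A ! j * u j a * u j b)"
    using index_mult_diag_mat_of_transpose[OF Uc sym_mat_eigvals(1)[OF A A_sym]]
    by (simp add: u_def)
  ultimately show ?thesis unfolding spectral_basis_def by blast
qed

lemma sum_rank_one_bilinear:
  assumes "\<forall>a<n. \<forall>b<n. K a b = (\<Sum>j<N. g j * u j a * u j b)"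
  shows "(\<Sum>a<n. \<Sum>b<n. K a b * x a * y b) = (\<Sum>j<N. g j * dot n (u j) x * dot n (u j) y)"
proof -
  have "(\<Sum>a<n. \<Sum>b<n. K a b * x a * y b)
      = (\<Sum>a<n. \<Sum>b<n. \<Sum>j<N. g j * (u j a * x a) * (u j b * y b))"
    by (intro sum.cong refl) (simp add: assms sum_distrib_left sum_distrib_right mult_ac)
  also have "\<dots> = (\<Sum>j<N. \<Sum>a<n. \<Sum>b<n. g j * (u j a * x a) * (u j b * y b))"
    by (simp add: sum.swap[where A = "{..<n}" and B = "{..<N}"])
  also have "\<dots> = (\<Sum>j<N. g j * dot n (u j) x * dot n (u j) y)"
    by (intro sum.cong refl) (simp add: dot_def sum_distrib_left sum_product mult_ac)
  finally show ?thesis .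
qed

lemma spectral_basis_quad_form:
  assumes "spectral_basis n A u"
  shows "quad_form n A x = (\<Sum>j<n. eigvals A ! j * (dot n (u j) x)\<^sup>2)"
proof -
  have "\<forall>a<n. \<forall>b<n. A $$ (a,b) = (\<Sum>j<n. eigvals A ! j * u j a * u j b)"
    using assms unfolding spectral_basis_def by blast
  from sum_rank_one_bilinear[where K = "\<lambda>a b. A $$ (a,b)", OF this]
  show ?thesis unfolding quad_form_def by (simp add: power2_eq_square mult.assoc)
qed

lemma spectral_basis_parseval:
  assumes "spectral_basis n A u"
  shows "dot n x x = (\<Sum>j<n. (dot n (u j) x)\<^sup>2)"
proof -
  have "(\<Sum>a<n. \<Sum>b<n. (if a = b then 1 else 0) * x a * x b) = (\<Sum>j<n. 1 * dot n (u j) x * dot n (u j) x)"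
    using assms unfolding spectral_basis_def by (intro sum_rank_one_bilinear) simp
  moreover have "(\<Sum>a<n. \<Sum>b<n. (if a = b then 1 else 0) * x a * x b) = dot n x x"
    unfolding dot_def by (simp add: if_distrib[of "\<lambda>y. y * _"] cong: if_cong)
  ultimately show ?thesis by (simp add: power2_eq_square)
qed

lemma spectral_basis_eigenvector:
  assumes "spectral_basis n A u" and "a < n" and "l < n"
  shows "(\<Sum>b<n. A $$ (a,b) * u l b) = eigvals A ! l * u l a"
proof -
  have "(\<Sum>b<n. A $$ (a,b) * u l b) = (\<Sum>b<n. \<Sum>j<n. eigvals A ! j * u j a * (u j b * u l b))"
    using assms(1,2) unfolding spectral_basis_def
    by (intro sum.cong refl) (simp add: sum_distrib_left sum_distrib_right mult_ac)
  also have "\<dots> = (\<Sum>j<n. eigvals A ! j * u j a * dot n (u j) (u l))"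
    unfolding dot_def sum_distrib_left by (rule sum.swap)
  also have "\<dots> = (\<Sum>j<n. if j = l then eigvals A ! l * u l a else 0)"
    using assms unfolding spectral_basis_def orthonormal_def by (intro sum.cong refl) auto
  also have "\<dots> = eigvals A ! l * u l a" using assms(3) by simp
  finally show ?thesis .
qed

lemma bessel_inequality:
  fixes w :: "nat \<Rightarrow> nat \<Rightarrow> real"
  assumes orth: "\<And>j l. j < N \<Longrightarrow> l < N \<Longrightarrow> j \<noteq> l \<Longrightarrow> dot n (w j) (w l) = 0"
  shows "(\<Sum>j<N. (dot n (w j) x)\<^sup>2 / dot n (w j) (w j)) \<le> dot n x x"
proof -
  define c where "c j = dot n (w j) x / dot n (w j) (w j)" for j
  define p where "p a = (\<Sum>j<N. c j * w j a)" for a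
  define T where "T = (\<Sum>j<N. (dot n (w j) x)\<^sup>2 / dot n (w j) (w j))"
  have xp: "dot n x p = T"
  proof -
    have "dot n x p = (\<Sum>j<N. \<Sum>a<n. c j * (w j a * x a))"
      unfolding dot_def p_def by (simp add: sum_distrib_left mult_ac sum.swap[of _ "{..<N}"])
    also have "\<dots> = (\<Sum>j<N. c j * dot n (w j) x)" by (simp add: dot_def sum_distrib_left)
    finally show ?thesis unfolding T_def c_def by (simp add: power2_eq_square)
  qed
  have pp: "dot n p p = T"
  proof -
    have "dot n p p = (\<Sum>j<N. \<Sum>l<N. c j * c l * dot n (w j) (w l))"
      unfolding dot_def p_def sum_product
      by (simp add: sum_distrib_left mult_ac sum.swap[of _ "{..<N}" "{..<n}"])
    also have "\<dots> = (\<Sum>j<N. c j * c j * dot n (w j) (w j))"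
    proof (intro sum.cong refl)
      fix j assume "j \<in> {..<N}"
      have "(\<Sum>l<N. c j * c l * dot n (w j) (w l))
          = (\<Sum>l<N. if l = j then c j * c j * dot n (w j) (w j) else 0)"
        using orth \<open>j \<in> {..<N}\<close> by (intro sum.cong refl) auto
      also have "\<dots> = c j * c j * dot n (w j) (w j)"
        using \<open>j \<in> {..<N}\<close> by simp
      finally show "(\<Sum>l<N. c j * c l * dot n (w j) (w l)) = c j * c j * dot n (w j) (w j)" .
    qed
    finally show ?thesis unfolding T_def c_def by (auto simp: power2_eq_square intro!: sum.cong)
  qed
  have "0 \<le> dot n (\<lambda>a. x a - p a) (\<lambda>a. x a - p a)" by (rule dot_self_nonneg)
  also have "\<dots> = dot n x x - 2 * dot n x p + dot n p p"
    unfolding dot_def by (simp add: algebra_simps sum.distrib sum_subtractf sum_distrib_left)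
  finally show ?thesis using xp pp unfolding T_def by simp
qed

lemma weighted_sum_le_sum_take:
  fixes ls :: "real list" and t :: "nat \<Rightarrow> real"
  assumes sorted: "sorted_wrt (\<ge>) ls" and nonneg: "\<forall>l\<in>set ls. 0 \<le> l"
    and t01: "\<And>j. j < length ls \<Longrightarrow> 0 \<le> t j \<and> t j \<le> 1"
    and tsum: "(\<Sum>j<length ls. t j) \<le> real k"
  shows "(\<Sum>j<length ls. ls ! j * t j) \<le> sum_list (take k ls)"
proof -
  let ?N = "length ls"
  \<comment> \<open>With c the (k+1)-st largest entry (0 if there is none), every term
     (ls ! j - c) * (t j - \<chi> j) is nonpositive.\<close>
  define c where "c = (if k < ?N then ls ! k else 0)"
  define \<chi> where "\<chi> j = (if j < k then 1 else 0 :: real)" for j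
  have c: "0 \<le> c" unfolding c_def using nonneg by auto
  have take: "sum_list (take k ls) = (\<Sum>j<?N. ls ! j * \<chi> j)"
  proof -
    have "sum_list (take k ls) = (\<Sum>j<min k ?N. ls ! j)"
      by (simp add: sum_list_sum_nth lessThan_atLeast0 min.commute)
    also have "{..<min k ?N} = {j\<in>{..<?N}. j < k}" by auto
    also have "(\<Sum>j\<in>{j\<in>{..<?N}. j < k}. ls ! j) = (\<Sum>j<?N. if j < k then ls ! j else 0)"
      by (rule sum.inter_filter) simp
    also have "\<dots> = (\<Sum>j<?N. ls ! j * \<chi> j)" unfolding \<chi>_def by (intro sum.cong) auto
    finally show ?thesis .
  qed
  have "(ls ! j - c) * (t j - \<chi> j) \<le> 0" if j: "j < ?N" for j
  proof (cases "j < k")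
    case True
    then have "c \<le> ls ! j"
      unfolding c_def using sorted_wrt_nth_less[OF sorted, of j k] j nonneg by auto
    then show ?thesis using True t01[OF j] unfolding \<chi>_def by (simp add: mult_nonneg_nonpos)
  next
    case False
    then have "ls ! j \<le> c"
      unfolding c_def using sorted_wrt_nth_less[OF sorted, of k j] j by (cases "k = j") auto
    then show ?thesis using False t01[OF j] unfolding \<chi>_def by (simp add: mult_nonpos_nonneg)
  qed
  then have "(\<Sum>j<?N. (ls ! j - c) * (t j - \<chi> j)) \<le> 0" by (intro sum_nonpos) simp
  moreover have "c * (\<Sum>j<?N. t j) \<le> c * (\<Sum>j<?N. \<chi> j)"
  proof (cases "k < ?N")
    case True
    then have "{..<?N} \<inter> {j. j < k} = {..<k}" by auto
    then have "(\<Sum>j<?N. \<chi> j) = real k" unfolding \<chi>_def by (simp add: sum.If_cases)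
    then show ?thesis using tsum c by (simp add: mult_left_mono)
  qed (simp add: c_def)
  ultimately show ?thesis unfolding take
    by (simp add: algebra_simps sum_subtractf sum.distrib sum_distrib_left)
qed

lemma sum_sq_dot_orthogonal_le_sum_take:
  fixes w x :: "nat \<Rightarrow> nat \<Rightarrow> real"
  assumes sorted: "sorted_wrt (\<ge>) \<mu>" and len: "length \<mu> = N"
    and w: "\<And>j l. j < N \<Longrightarrow> l < N \<Longrightarrow> dot m (w j) (w l) = (if j = l then \<mu> ! j else 0)"
    and x: "orthonormal m k x"
  shows "(\<Sum>j<N. \<Sum>i<k. (dot m (w j) (x i))\<^sup>2) \<le> sum_list (take k \<mu>)"
proof -
  have \<mu>_nonneg: "0 \<le> \<mu> ! j" if "j < N" for j
    using w[OF that that] dot_self_nonneg by metis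
  have x_unit: "dot m (x i) (x i) = 1" if "i < k" for i
    using x that unfolding orthonormal_def by simp
  define s where "s j = (\<Sum>i<k. (dot m (w j) (x i))\<^sup>2)" for j
  \<comment> \<open>If \<mu> ! j = 0 then also s j = 0, so the junk value t j = 0 does no harm.\<close>
  define t where "t j = s j / \<mu> ! j" for j
  have s_le: "s j \<le> \<mu> ! j" if j: "j < N" for j
  proof -
    have "(\<Sum>i<k. (dot m (x i) (w j))\<^sup>2 / dot m (x i) (x i)) \<le> dot m (w j) (w j)"
      by (rule bessel_inequality) (use x in \<open>simp add: orthonormal_def\<close>)
    then show ?thesis using w[OF j j] x_unit unfolding s_def by (simp add: dot_commute)
  qed
  have s: "s j = \<mu> ! j * t j" if "j < N" for j
    using s_le[OF that] \<mu>_nonneg[OF that] sum_nonneg[of "{..<k}" "\<lambda>i. (dot m (w j) (x i))\<^sup>2"]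
    unfolding t_def s_def by (cases "\<mu> ! j = 0") auto
  have t01: "0 \<le> t j \<and> t j \<le> 1" if j: "j < N" for j
  proof (cases "\<mu> ! j = 0")
    case False
    then have "0 < \<mu> ! j" using \<mu>_nonneg[OF j] by simp
    moreover have "0 \<le> s j" unfolding s_def by (auto intro: sum_nonneg)
    ultimately show ?thesis using s_le[OF j] unfolding t_def by simp
  qed (simp add: t_def)
  have "(\<Sum>j<N. t j) = (\<Sum>i<k. \<Sum>j<N. (dot m (w j) (x i))\<^sup>2 / dot m (w j) (w j))"
    unfolding t_def s_def by (subst sum.swap) (simp add: w sum_divide_distrib)
  also have "\<dots> \<le> (\<Sum>i<k. dot m (x i) (x i))"
    by (intro sum_mono bessel_inequality) (simp add: w)
  also have "\<dots> = real k" by (simp add: x_unit)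
  finally have "(\<Sum>j<N. t j) \<le> real k" .
  moreover have "\<forall>l\<in>set \<mu>. 0 \<le> l" using \<mu>_nonneg len by (auto simp: in_set_conv_nth)
  ultimately have "(\<Sum>j<N. \<mu> ! j * t j) \<le> sum_list (take k \<mu>)"
    using weighted_sum_le_sum_take[OF sorted, of t k] t01 unfolding len by blast
  moreover have "(\<Sum>j<N. \<mu> ! j * t j) = (\<Sum>j<N. \<Sum>i<k. (dot m (w j) (x i))\<^sup>2)"
    using s unfolding s_def by simp
  ultimately show ?thesis by simp
qed

lemma S_k_attained:
  fixes A :: "real mat"
  assumes A: "A \<in> carrier_mat n n" and A_sym: "transpose_mat A = A" and k: "k \<le> n"
  shows "\<exists>u. orthonormal n k u \<and> S_k k A = (\<Sum>i<k. quad_form n A (u i))"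
proof -
  obtain u where u: "spectral_basis n A u" using sym_mat_spectral_basis[OF A A_sym] by blast
  then have orth: "orthonormal n n u" unfolding spectral_basis_def by simp
  have "quad_form n A (u i) = eigvals A ! i" if i: "i < n" for i
  proof -
    have "quad_form n A (u i) = (\<Sum>j<n. if j = i then eigvals A ! i else 0)"
      unfolding spectral_basis_quad_form[OF u]
      using orth i unfolding orthonormal_def by (intro sum.cong refl) auto
    then show ?thesis using i by simp
  qed
  then have "S_k k A = (\<Sum>i<k. quad_form n A (u i))"
    using k sym_mat_eigvals(1)[OF A A_sym]
    by (simp add: S_k_def sum_list_sum_nth lessThan_atLeast0 min_absorb1)
  moreover have "orthonormal n k u" using orth k unfolding orthonormal_def by simp
  ultimately show ?thesis by blast
qed

lemma gram_eigenvector_images: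
  fixes r v w :: "nat \<Rightarrow> nat \<Rightarrow> real"
  assumes gram: "\<And>a b. a < n \<Longrightarrow> b < n \<Longrightarrow> Q $$ (a,b) = dot m (r a) (r b)"
    and v: "spectral_basis n Q v" and w: "\<And>j e. w j e = (\<Sum>a<n. v j a * r a e)"
  shows "\<And>j l. j < n \<Longrightarrow> l < n \<Longrightarrow> dot m (w j) (w l) = (if j = l then eigvals Q ! j else 0)"
    and "\<And>y. (\<Sum>a<n. (dot m (r a) y)\<^sup>2) = (\<Sum>j<n. (dot m (w j) y)\<^sup>2)"
proof -
  have w_dot: "dot m (w j) y = dot n (v j) (\<lambda>a. dot m (r a) y)" for j y
    unfolding dot_def w sum_distrib_left sum_distrib_right
    by (subst sum.swap) (simp add: mult_ac)
  show "(\<Sum>a<n. (dot m (r a) y)\<^sup>2) = (\<Sum>j<n. (dot m (w j) y)\<^sup>2)" for y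
    using spectral_basis_parseval[OF v, of "\<lambda>a. dot m (r a) y"]
    unfolding w_dot by (simp add: dot_def power2_eq_square)
  fix j l assume j: "j < n" and l: "l < n"
  have "dot m (r a) (w l) = eigvals Q ! l * v l a" if a: "a < n" for a
  proof -
    have "dot m (r a) (w l) = (\<Sum>b<n. Q $$ (a,b) * v l b)"
      using w_dot[of l "r a"] gram[OF a] by (simp add: dot_def dot_commute mult.commute)
    then show ?thesis using spectral_basis_eigenvector[OF v a l] by simp
  qed
  then have "dot m (w j) (w l) = eigvals Q ! l * dot n (v j) (v l)"
    unfolding w_dot by (simp add: dot_def sum_distrib_left mult_ac)
  then show "dot m (w j) (w l) = (if j = l then eigvals Q ! j else 0)"
    using v j l unfolding spectral_basis_def orthonormal_def by simp
qed

lemma sum_sq_dot_le_S_k_gram: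
  fixes r x :: "nat \<Rightarrow> nat \<Rightarrow> real"
  assumes Q: "Q \<in> carrier_mat n n"
    and gram: "\<And>a b. a < n \<Longrightarrow> b < n \<Longrightarrow> Q $$ (a,b) = dot m (r a) (r b)"
    and x: "orthonormal m k x"
  shows "(\<Sum>i<k. \<Sum>a<n. (dot m (r a) (x i))\<^sup>2) \<le> S_k k Q"
proof -
  have Q_sym: "transpose_mat Q = Q"
    by (rule eq_matI) (use Q in \<open>auto simp: gram dot_commute\<close>)
  obtain v where v: "spectral_basis n Q v" using sym_mat_spectral_basis[OF Q Q_sym] by blast
  define w where "w j e = (\<Sum>a<n. v j a * r a e)" for j e
  have "(\<Sum>i<k. \<Sum>a<n. (dot m (r a) (x i))\<^sup>2) = (\<Sum>j<n. \<Sum>i<k. (dot m (w j) (x i))\<^sup>2)"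
    using gram_eigenvector_images(2)[of n Q m r v w] gram v w_def by (subst sum.swap) simp
  also have "\<dots> \<le> S_k k Q"
    unfolding S_k_def
    using sum_sq_dot_orthogonal_le_sum_take[OF sym_mat_eigvals(2,1)[OF Q Q_sym] _ x]
      gram_eigenvector_images(1)[of n Q m r v w] gram v w_def
    by blast
  finally show ?thesis .
qed

lemma sum_sq_dot_le_sum_norms:
  fixes r x :: "nat \<Rightarrow> nat \<Rightarrow> real"
  assumes "orthonormal m k x"
  shows "(\<Sum>i<k. \<Sum>a<n. (dot m (r a) (x i))\<^sup>2) \<le> (\<Sum>a<n. dot m (r a) (r a))"
proof -
  have "(\<Sum>i<k. \<Sum>a<n. (dot m (r a) (x i))\<^sup>2)
      = (\<Sum>a<n. \<Sum>i<k. (dot m (x i) (r a))\<^sup>2 / dot m (x i) (x i))"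
    using assms unfolding orthonormal_def by (subst sum.swap) (simp add: dot_commute)
  also have "\<dots> \<le> (\<Sum>a<n. dot m (r a) (r a))"
    using assms unfolding orthonormal_def by (intro sum_mono bessel_inequality) simp
  finally show ?thesis .
qed

lemma A_alpha_carrier: "A_alpha \<alpha> n adj \<in> carrier_mat n n"
  by (simp add: A_alpha_def deg_mat_def adj_mat_def)

lemma A_alpha_sym:
  assumes "\<And>i j. adj i j = adj j i"
  shows "transpose_mat (A_alpha \<alpha> n adj) = A_alpha \<alpha> n adj"
  by (rule eq_matI) (auto simp: A_alpha_def deg_mat_def adj_mat_def assms)

lemma quad_form_A_alpha:
  "quad_form n (A_alpha \<alpha> n adj) x
    = \<alpha> * (\<Sum>i<n. real (degree n adj i) * (x i)\<^sup>2) + (1 - \<alpha>) * quad_form n (adj_mat n adj) x"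
proof -
  have "quad_form n (A_alpha \<alpha> n adj) x
      = (\<Sum>i<n. \<Sum>j<n. (if i = j then \<alpha> * real (degree n adj i) * (x i)\<^sup>2 else 0)
          + (1 - \<alpha>) * (adj_mat n adj $$ (i,j) * x i * x j))"
    unfolding quad_form_def
    by (intro sum.cong refl) (simp add: A_alpha_def deg_mat_def adj_mat_def algebra_simps power2_eq_square)
  then show ?thesis
    unfolding quad_form_def by (simp add: sum.distrib sum_distrib_left mult.assoc)
qed

lemma signless_laplacian_carrier: "signless_laplacian n adj \<in> carrier_mat n n"
  by (simp add: signless_laplacian_def deg_mat_def adj_mat_def)

lemma degree_le_max_degree:
  assumes "a < n"
  shows "degree n (graph_adj E) a \<le> max_degree n E"
  unfolding max_degree_def by (rule Max_ge) (use assms in auto)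

lemma edge_enum_bij:
  assumes "finite E"
  shows "bij_betw (edge_enum E) {..<card E} E"
proof -
  from assms obtain f where "bij_betw f {..<card E} E"
    using ex_bij_betw_nat_finite by (metis atLeast0LessThan)
  then show ?thesis unfolding edge_enum_def by (rule someI[where P = "\<lambda>f. bij_betw f {..<card E} E"])
qed

definition incidence :: "nat set set \<Rightarrow> nat \<Rightarrow> nat \<Rightarrow> real" where
  "incidence E a e = (if a \<in> edge_enum E e then 1 else 0)"

lemma incidence_mult_self [simp]: "incidence E a e * incidence E a e = incidence E a e"
  by (simp add: incidence_def)

lemma sum_incidence_mult:
  assumes "finite E"
  shows "(\<Sum>e<card E. incidence E a e * incidence E b e) = real (card {x\<in>E. a \<in> x \<and> b \<in> x})"
proof -
  have "(\<Sum>e<card E. incidence E a e * incidence E b e)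
      = (\<Sum>x\<in>E. if a \<in> x \<and> b \<in> x then 1 else 0)"
    unfolding incidence_def
    by (subst sum.reindex_bij_betw[OF edge_enum_bij[OF assms], symmetric]) (intro sum.cong, auto)
  also have "\<dots> = real (card {x\<in>E. a \<in> x \<and> b \<in> x})"
    using assms by (simp add: sum.If_cases Int_def conj_commute)
  finally show ?thesis .
qed

lemma line_adj_irrefl [simp]: "\<not> line_adj E i i"
  unfolding line_adj_def by simp

context
  fixes n :: nat and E :: "nat set set"
  assumes G: "simple_graph n E" and fin: "finite E"
begin

lemma edgeD: "x \<in> E \<Longrightarrow> x \<subseteq> {..<n} \<and> card x = 2 \<and> finite x"
  using G unfolding simple_graph_def by (auto intro: card_ge_0_finite)

lemma edge_enum_in: "e < card E \<Longrightarrow> edge_enum E e \<in> E"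
  using edge_enum_bij[OF fin] by (auto dest: bij_betwE)

lemma degree_eq_card_incident_edges:
  assumes a: "a < n"
  shows "degree n (graph_adj E) a = card {x\<in>E. a \<in> x}"
proof -
  let ?N = "{j. j < n \<and> graph_adj E a j}"
  have "inj_on (\<lambda>j. {a,j}) ?N"
  proof (rule inj_onI)
    fix j j' assume "j \<in> ?N" "j' \<in> ?N" and eq: "{a,j} = {a,j'}"
    then have "j \<noteq> a" "j' \<noteq> a" using edgeD unfolding graph_adj_def by force+
    with eq show "j = j'" by (auto simp: doubleton_eq_iff)
  qed
  moreover have "(\<lambda>j. {a,j}) ` ?N = {x\<in>E. a \<in> x}"
  proof
    show "(\<lambda>j. {a,j}) ` ?N \<subseteq> {x\<in>E. a \<in> x}" unfolding graph_adj_def by auto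
    show "{x\<in>E. a \<in> x} \<subseteq> (\<lambda>j. {a,j}) ` ?N"
    proof
      fix x assume x: "x \<in> {x\<in>E. a \<in> x}"
      then obtain p q where "x = {p,q}" and sub: "x \<subseteq> {..<n}"
        using edgeD[of x] by (auto simp: card_2_iff)
      then obtain j where "x = {a,j}" using x by auto
      then show "x \<in> (\<lambda>j. {a,j}) ` ?N" using x sub unfolding graph_adj_def by auto
    qed
  qed
  ultimately show ?thesis unfolding degree_def by (metis card_image)
qed

lemma sum_incidence_vertex:
  assumes "a < n"
  shows "(\<Sum>e<card E. incidence E a e) = real (degree n (graph_adj E) a)"
  using sum_incidence_mult[OF fin, of a a]
  by (simp add: degree_eq_card_incident_edges[OF assms])

lemma incidence_gram_vertices:
  assumes a: "a < n" and b: "b < n"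
  shows "(\<Sum>e<card E. incidence E a e * incidence E b e) = signless_laplacian n (graph_adj E) $$ (a,b)"
proof (cases "a = b")
  case True
  have "\<not> graph_adj E a a" unfolding graph_adj_def using edgeD[of "{a}"] by auto
  then show ?thesis
    using True sum_incidence_vertex[OF a] a
    by (simp add: signless_laplacian_def deg_mat_def adj_mat_def)
next
  case False
  have "x = {a,b}" if x: "x \<in> E" "a \<in> x" "b \<in> x" for x
  proof -
    have "{a,b} \<subseteq> x" "card {a,b} = card x" using x False edgeD[OF x(1)] by auto
    then show ?thesis using card_subset_eq[of x "{a,b}"] edgeD[OF x(1)] by simp
  qed
  then have "{x\<in>E. a \<in> x \<and> b \<in> x} \<subseteq> {{a,b}}" by blast
  then have "{x\<in>E. a \<in> x \<and> b \<in> x} = (if graph_adj E a b then {{a,b}} else {})"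
    unfolding graph_adj_def by auto
  moreover have "signless_laplacian n (graph_adj E) $$ (a,b) = (if graph_adj E a b then 1 else 0)"
    using a b False by (simp add: signless_laplacian_def deg_mat_def adj_mat_def)
  ultimately show ?thesis using sum_incidence_mult[OF fin, of a b] by simp
qed

lemma incidence_gram_edges:
  assumes i: "i < card E" and j: "j < card E"
  shows "(\<Sum>a<n. incidence E a i * incidence E a j)
    = (if line_adj E i j then 1 else 0) + (if i = j then 2 else 0)"
proof -
  let ?X = "edge_enum E i" and ?Y = "edge_enum E j"
  have X: "?X \<subseteq> {..<n}" "card ?X = 2" "finite ?X" and Y: "card ?Y = 2" "finite ?Y"
    using edgeD[OF edge_enum_in[OF i]] edgeD[OF edge_enum_in[OF j]] by auto
  have "(\<Sum>a<n. incidence E a i * incidence E a j) = (\<Sum>a<n. if a \<in> ?X \<inter> ?Y then 1 else 0)"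
    unfolding incidence_def by (intro sum.cong refl) auto
  also have "\<dots> = (\<Sum>a\<in>{..<n} \<inter> (?X \<inter> ?Y). 1)" by (rule sum.inter_restrict[symmetric]) simp
  also have "\<dots> = real (card ({..<n} \<inter> (?X \<inter> ?Y)))" by simp
  also have "{..<n} \<inter> (?X \<inter> ?Y) = ?X \<inter> ?Y" using X by auto
  finally have eq: "(\<Sum>a<n. incidence E a i * incidence E a j) = real (card (?X \<inter> ?Y))" .
  show ?thesis
  proof (cases "i = j")
    case True
    then show ?thesis using eq X unfolding line_adj_def by simp
  next
    case False
    then have "?X \<noteq> ?Y" using edge_enum_bij[OF fin] i j unfolding bij_betw_def inj_on_def by auto
    have "?X \<inter> ?Y \<noteq> ?X"
    proof
      assume "?X \<inter> ?Y = ?X"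
      then have "?X \<subseteq> ?Y" by blast
      then have "?X = ?Y" using card_subset_eq[OF Y(2)] X(2) Y(1) by simp
      with \<open>?X \<noteq> ?Y\<close> show False ..
    qed
    then have "?X \<inter> ?Y \<subset> ?X" by blast
    then have "card (?X \<inter> ?Y) < 2" using psubset_card_mono[OF X(3)] X(2) by metis
    moreover have "?X \<inter> ?Y \<noteq> {} \<Longrightarrow> card (?X \<inter> ?Y) \<noteq> 0" using X by auto
    ultimately show ?thesis using eq False unfolding line_adj_def by (cases "?X \<inter> ?Y = {}") auto
  qed
qed

lemma sum_incidence_edge:
  assumes "i < card E"
  shows "(\<Sum>a<n. incidence E a i) = 2"
  using incidence_gram_edges[OF assms assms] by simp

lemma line_degree_le:
  assumes i: "i < card E"
  shows "real (degree (card E) (line_adj E) i) \<le> 2 * real (max_degree n E) - 2"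
proof -
  have "real (degree (card E) (line_adj E) i) = (\<Sum>j<card E. if line_adj E i j then 1 else 0)"
    unfolding degree_def by (simp add: sum.If_cases Int_def)
  also have "\<dots> = (\<Sum>j<card E. \<Sum>a<n. incidence E a i * incidence E a j) - 2"
    using i by (simp add: incidence_gram_edges sum_subtractf)
  also have "(\<Sum>j<card E. \<Sum>a<n. incidence E a i * incidence E a j)
      = (\<Sum>a<n. incidence E a i * real (degree n (graph_adj E) a))"
    by (subst sum.swap) (simp add: sum_incidence_vertex sum_distrib_left[symmetric])
  also have "\<dots> \<le> (\<Sum>a<n. incidence E a i * real (max_degree n E))"
    by (intro sum_mono mult_left_mono) (auto simp: degree_le_max_degree incidence_def)
  also have "\<dots> = 2 * real (max_degree n E)"
    using sum_incidence_edge[OF i] by (simp add: sum_distrib_right[symmetric])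
  finally show ?thesis by simp
qed

lemma quad_form_line_adj:
  "quad_form (card E) (adj_mat (card E) (line_adj E)) x
    = (\<Sum>a<n. (dot (card E) (incidence E a) x)\<^sup>2) - 2 * dot (card E) x x"
proof -
  let ?m = "card E"
  have "quad_form ?m (adj_mat ?m (line_adj E)) x
      = (\<Sum>i<?m. \<Sum>j<?m. (\<Sum>a<n. 1 * incidence E a i * incidence E a j) * x i * x j
          - (if i = j then 2 * (x i * x j) else 0))"
    unfolding quad_form_def by (intro sum.cong refl) (simp add: adj_mat_def incidence_gram_edges algebra_simps)
  also have "\<dots> = (\<Sum>i<?m. \<Sum>j<?m. (\<Sum>a<n. 1 * incidence E a i * incidence E a j) * x i * x j)
      - 2 * dot ?m x x"
    by (simp add: sum_subtractf dot_def sum_distrib_left)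
  also have "(\<Sum>i<?m. \<Sum>j<?m. (\<Sum>a<n. 1 * incidence E a i * incidence E a j) * x i * x j)
      = (\<Sum>a<n. 1 * dot ?m (incidence E a) x * dot ?m (incidence E a) x)"
    by (rule sum_rank_one_bilinear) simp
  finally show ?thesis by (simp add: power2_eq_square)
qed

lemma sum_incidence_norms: "(\<Sum>a<n. dot (card E) (incidence E a) (incidence E a)) = 2 * real (card E)"
proof -
  have "(\<Sum>a<n. dot (card E) (incidence E a) (incidence E a))
      = (\<Sum>e<card E. \<Sum>a<n. incidence E a e * incidence E a e)"
    unfolding dot_def by (rule sum.swap)
  also have "\<dots> = 2 * real (card E)" by (simp add: sum_incidence_edge)
  finally show ?thesis .
qed

lemma quad_form_line_A_alpha_le:
  assumes "0 \<le> \<alpha>" and "\<alpha> \<le> 1"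
  shows "quad_form (card E) (A_alpha \<alpha> (card E) (line_adj E)) x
    \<le> (2 * \<alpha> * real (max_degree n E) - 2) * dot (card E) x x
      + (1 - \<alpha>) * (\<Sum>a<n. (dot (card E) (incidence E a) x)\<^sup>2)"
proof -
  let ?m = "card E" and ?\<Delta> = "real (max_degree n E)"
  have "(\<Sum>i<?m. real (degree ?m (line_adj E) i) * (x i)\<^sup>2) \<le> (\<Sum>i<?m. (2 * ?\<Delta> - 2) * (x i)\<^sup>2)"
    by (intro sum_mono mult_right_mono) (auto simp: line_degree_le)
  also have "\<dots> = (2 * ?\<Delta> - 2) * dot ?m x x"
    by (simp add: dot_def sum_distrib_left power2_eq_square)
  finally have "\<alpha> * (\<Sum>i<?m. real (degree ?m (line_adj E) i) * (x i)\<^sup>2) \<le> \<alpha> * ((2 * ?\<Delta> - 2) * dot ?m x x)"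
    using assms(1) by (rule mult_left_mono)
  then show ?thesis
    unfolding quad_form_A_alpha quad_form_line_adj by (simp add: algebra_simps)
qed

lemma S_k_line_A_alpha_le:
  assumes \<alpha>: "0 \<le> \<alpha>" "\<alpha> \<le> 1" and k: "k \<le> card E"
    and B: "\<And>x. orthonormal (card E) k x
      \<Longrightarrow> (\<Sum>i<k. \<Sum>a<n. (dot (card E) (incidence E a) (x i))\<^sup>2) \<le> B"
  shows "S_k k (A_alpha \<alpha> (card E) (line_adj E)) \<le> real k * (2 * \<alpha> * real (max_degree n E) - 2) + (1 - \<alpha>) * B"
proof -
  let ?M = "A_alpha \<alpha> (card E) (line_adj E)" and ?c = "2 * \<alpha> * real (max_degree n E) - 2"
  have "transpose_mat ?M = ?M" by (rule A_alpha_sym) (auto simp: line_adj_def)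
  from S_k_attained[OF A_alpha_carrier this k] obtain x
    where x: "orthonormal (card E) k x" and S: "S_k k ?M = (\<Sum>i<k. quad_form (card E) ?M (x i))"
    by blast
  have "S_k k ?M \<le> (\<Sum>i<k. ?c * dot (card E) (x i) (x i)
      + (1 - \<alpha>) * (\<Sum>a<n. (dot (card E) (incidence E a) (x i))\<^sup>2))"
    unfolding S by (intro sum_mono quad_form_line_A_alpha_le \<alpha>)
  also have "\<dots> = real k * ?c + (1 - \<alpha>) * (\<Sum>i<k. \<Sum>a<n. (dot (card E) (incidence E a) (x i))\<^sup>2)"
    using x unfolding orthonormal_def by (simp add: sum.distrib sum_distrib_left)
  also have "\<dots> \<le> real k * ?c + (1 - \<alpha>) * B"
    using B[OF x] \<alpha> by (simp add: mult_left_mono)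
  finally show ?thesis .
qed

lemma signless_laplacian_eq_dot_incidence:
  assumes "a < n" "b < n"
  shows "signless_laplacian n (graph_adj E) $$ (a,b) = dot (card E) (incidence E a) (incidence E b)"
  using incidence_gram_vertices[OF assms] by (simp add: dot_def)

end

theorem theorem6p2:
  fixes n :: nat and E :: "nat set set" and \<alpha> :: real
  assumes "simple_graph n E"
    and "card E \<ge> 1"
    and "0 \<le> \<alpha>" and "\<alpha> \<le> 1"
  shows "(\<forall>k. 1 \<le> k \<and> k \<le> min n (card E) \<longrightarrow>
           S_k k (A_alpha \<alpha> (card E) (line_adj E))
             \<le> 2 * real k * (\<alpha> * real (max_degree n E) - 1)
               + (1 - \<alpha>) * S_k k (signless_laplacian n (graph_adj E)))
       \<and> (card E > n \<longrightarrow> (\<forall>k. n + 1 \<le> k \<and> k \<le> card E \<longrightarrow>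
           S_k k (A_alpha \<alpha> (card E) (line_adj E))
             \<le> 2 * \<alpha> * real k * (real (max_degree n E) - 1)
               + 2 * (1 - \<alpha>) * (real (card E) - real k)))"
proof -
  let ?m = "card E" and ?\<Delta> = "real (max_degree n E)" and ?Q = "signless_laplacian n (graph_adj E)"
  have fin: "finite E" using assms(2) by (intro card_ge_0_finite) simp
  note bound = S_k_line_A_alpha_le[OF assms(1) fin assms(3,4)]
  show ?thesis
  proof (intro conjI allI impI)
    fix k assume "1 \<le> k \<and> k \<le> min n ?m"
    then have "S_k k (A_alpha \<alpha> ?m (line_adj E)) \<le> real k * (2 * \<alpha> * ?\<Delta> - 2) + (1 - \<alpha>) * S_k k ?Q"
      using signless_laplacian_eq_dot_incidence[OF assms(1) fin]
      by (intro bound sum_sq_dot_le_S_k_gram[OF signless_laplacian_carrier]) auto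
    then show "S_k k (A_alpha \<alpha> ?m (line_adj E)) \<le> 2 * real k * (\<alpha> * ?\<Delta> - 1) + (1 - \<alpha>) * S_k k ?Q"
      by (simp add: algebra_simps)
  next
    fix k assume "n < ?m" and "n + 1 \<le> k \<and> k \<le> ?m"
    then have "S_k k (A_alpha \<alpha> ?m (line_adj E)) \<le> real k * (2 * \<alpha> * ?\<Delta> - 2) + (1 - \<alpha>) * (2 * real ?m)"
      using sum_incidence_norms[OF assms(1) fin]
      by (intro bound) (auto dest: sum_sq_dot_le_sum_norms[where r = "incidence E" and n = n])
    then show "S_k k (A_alpha \<alpha> ?m (line_adj E))
        \<le> 2 * \<alpha> * real k * (?\<Delta> - 1) + 2 * (1 - \<alpha>) * (real ?m - real k)"
      by (simp add: algebra_simps)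
  qed
qed

end
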